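(* Let $q\in[1,2]$. Let $R\in C^2(\mathbb{R}^n,\mathbb{R})$ be separable, i.e. $R(x)=\sum_{i=1}^n R_i(x_i)$, and inversely $\mu$-coercive for some $\mu>0$, i.e. $x^T\left(\nabla^2_x R(x)\right)^{-1}x\ge \mu\|x\|_{L_2}^2$ for all $x\in\mathbb{R}^n$. Let $f\in C^1(\mathbb{R}^n,\mathbb{R})$ and let $x_t$ be a solution of the steepest mirror flow $$d\,\nabla_x R(x_t) = -\operatorname{sign}(\nabla_x f(x_t))\odot|\nabla_x f(x_t)|^{q-1}\,dt,\qquad x_0=x_{\mathrm{init}}.$$ Assume that the set of minimizers of $f$ in $\operatorname{dom}R$ is non-empty and that there is a constant $B>0$ such that $|\partial_i f(x_t)|\le B$ for all $t>0$ and all $i\in[n]$. Then $t\mapsto f(x_t)$ is non-increasing and $$\int_0^\infty\|\nabla_x f(x_t)\|_{L_2}^2\,dt\le \frac{B^{2-q}\left(f(x_0)-f(x_\infty)\right)}{\mu},$$ where $f(x_\infty):=\lim_{t\to\infty}f(x_t)$. If moreover $f$ is strongly convex, then $\lim_{t\to\infty}x_t=x^*$, where $x^*$ is the unique minimizer of $f$, and the convergence is linear with rate $\mu B^{q-2}\Lambda$, in the sense that $f(x_t)-f(x^* )\le (f(x_0)-f(x^* ))\exp(-\mu B^{q-2}\Lambda t)$, where $\Lambda>0$ is a constant such that $f$ satisfies the Polyak–Łojasiewicz inequality $\tfrac12\|\nabla_x f(x)\|_{L_2}^2\ge\Lambda(f(x)-f(x^* ))$ for all $x$.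
   Context: $\operatorname{sign}$, $|\cdot|$, powers and $\odot$ act entrywise on vectors. $\|\cdot\|_{L_2}$ is the Euclidean norm. The exponent $q$ is the dual exponent of $p$ ($1/p+1/q=1$), so the flow is the $L_p$ steepest mirror flow; $q=2$ is gradient flow and $q=1$ is sign gradient flow. *)

theory Defs
  imports "HOL-Analysis.Analysis"
begin

definition C1_grad :: "(real^'n \<Rightarrow> real) \<Rightarrow> (real^'n \<Rightarrow> real^'n) \<Rightarrow> bool" where
  "C1_grad f g \<longleftrightarrow> (\<forall>x. (f has_derivative (\<lambda>h. g x \<bullet> h)) (at x)) \<and> continuous_on UNIV g"

definition C2_grad_hess :: "(real^'n \<Rightarrow> real) \<Rightarrow> (real^'n \<Rightarrow> real^'n) \<Rightarrow> (real^'n \<Rightarrow> real^'n^'n) \<Rightarrow> bool" where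
  "C2_grad_hess f g H \<longleftrightarrow> (\<forall>x. (f has_derivative (\<lambda>h. g x \<bullet> h)) (at x))
      \<and> (\<forall>x. (g has_derivative (\<lambda>h. H x *v h)) (at x)) \<and> continuous_on UNIV H"

definition separable :: "(real^'n \<Rightarrow> real) \<Rightarrow> bool" where
  "separable R \<longleftrightarrow> (\<exists>Rc :: 'n \<Rightarrow> real \<Rightarrow> real. \<forall>x. R x = (\<Sum>i\<in>UNIV. Rc i (x $ i)))"

definition inversely_coercive :: "real \<Rightarrow> (real^'n \<Rightarrow> real^'n^'n) \<Rightarrow> bool" where
  "inversely_coercive \<mu> H \<longleftrightarrow> (\<forall>x. invertible (H x) \<and> x \<bullet> (matrix_inv (H x) *v x) \<ge> \<mu> * (norm x)\<^sup>2)"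

definition strongly_convex :: "(real^'n \<Rightarrow> real) \<Rightarrow> bool" where
  "strongly_convex f \<longleftrightarrow> (\<exists>m>0. \<forall>x y u. 0 \<le> u \<and> u \<le> 1 \<longrightarrow>
      f (u *\<^sub>R x + (1 - u) *\<^sub>R y) \<le> u * f x + (1 - u) * f y - m / 2 * u * (1 - u) * (norm (x - y))\<^sup>2)"

definition smf_dir :: "real \<Rightarrow> real^'n \<Rightarrow> real^'n" where
  "smf_dir q g = (\<chi> i. - (sgn (g $ i) * \<bar>g $ i\<bar> powr (q - 1)))"

end

theory Submission
  imports Defs
begin

(* Separability makes the Hessian of R diagonal, and inverse mu-coercivity evaluated at the
   points r e_k confines each diagonal entry to (0, 1/mu]. The mirror flow therefore decouples into
   the coordinatewise equations x_k' = - sign(g_k) |g_k|^(q-1) / (d_k d_k R)(x), with g = grad f(x),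
   and |g_k|^q >= B^(q-2) g_k^2 (as q <= 2 and |g_k| <= B) gives the dissipation inequality
   d/dt f(x_t) <= - mu B^(q-2) |grad f(x_t)|^2. Integrating it yields monotonicity, the limit of
   f(x_t) and the integral bound; combined with a PL inequality it becomes a linear differential
   inequality for f(x_t) - min f, which Gronwall integrates to the exponential rate. Strong
   convexity supplies uniqueness of the minimizer, a PL inequality and quadratic growth, so that
   f(x_t) -> min f forces x_t -> argmin f. *)

lemma has_vector_derivative_vec_nth_iff:
  fixes f :: "real \<Rightarrow> real^'n"
  shows "(f has_vector_derivative f') (at t within S) \<longleftrightarrow>
    (\<forall>i. ((\<lambda>t. f t $ i) has_vector_derivative f' $ i) (at t within S))"
proof
  assume "(f has_vector_derivative f') (at t within S)"
  then show "\<forall>i. ((\<lambda>t. f t $ i) has_vector_derivative f' $ i) (at t within S)"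
    unfolding has_vector_derivative_def
    using bounded_linear.has_derivative[OF bounded_linear_vec_nth, of f "\<lambda>t. t *\<^sub>R f'"] by simp
next
  assume nth: "\<forall>i. ((\<lambda>t. f t $ i) has_vector_derivative f' $ i) (at t within S)"
  have "((\<lambda>t. f t \<bullet> b) has_derivative (\<lambda>s. (s *\<^sub>R f') \<bullet> b)) (at t within S)"
    if "b \<in> Basis" for b
  proof -
    obtain i where "b = axis i 1" using \<open>b \<in> Basis\<close> by (auto simp: Basis_vec_def)
    then show ?thesis using nth unfolding has_vector_derivative_def by (simp add: inner_axis)
  qed
  then show "(f has_vector_derivative f') (at t within S)"
    unfolding has_vector_derivative_def using has_derivative_componentwise_within by blast
qed

lemma has_vector_derivative_along_line:
  fixes g :: "'a::real_normed_vector \<Rightarrow> 'b::real_normed_vector"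
  assumes "(g has_derivative g') (at (y + t *\<^sub>R e))"
  shows "((\<lambda>s. g (y + s *\<^sub>R e)) has_vector_derivative g' e) (at t)"
proof -
  have "((\<lambda>s. y + s *\<^sub>R e) has_vector_derivative e) (at t)"
    by (auto intro!: derivative_eq_intros)
  from vector_derivative_diff_chain_within[OF this has_derivative_at_withinI[OF assms]]
  show ?thesis by (simp add: o_def)
qed

lemma has_real_derivative_along_line:
  fixes f :: "'a::real_normed_vector \<Rightarrow> real"
  assumes "(f has_derivative f') (at (y + t *\<^sub>R e))"
  shows "((\<lambda>s. f (y + s *\<^sub>R e)) has_real_derivative f' e) (at t)"
  using has_vector_derivative_along_line[OF assms]
  by (simp add: has_real_derivative_iff_has_vector_derivative)

lemma axis_eq_scaleR: "axis k t = t *\<^sub>R axis k (1::real)"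
  by (simp add: axis_def vec_eq_iff)

lemma at_within_nonneg_eq_at: "(t::real) > 0 \<Longrightarrow> at t within {0..} = at t"
  by (rule at_within_interior) simp

lemma diagonal_matrix_vector_mult_nth:
  fixes A :: "'a::comm_semiring_1^'n^'n"
  assumes "\<And>i j. i \<noteq> j \<Longrightarrow> A $ i $ j = 0"
  shows "(A *v w) $ k = A $ k $ k * w $ k"
proof -
  have "(A *v w) $ k = (\<Sum>j\<in>UNIV. A $ k $ j * w $ j)" by (simp add: matrix_vector_mult_def)
  also have "\<dots> = (\<Sum>j\<in>{k}. A $ k $ j * w $ j)"
    by (rule sum.mono_neutral_right) (use assms in auto)
  finally show ?thesis by simp
qed

lemma invertible_diagonal_nonzero:
  fixes A :: "real^'n^'n"
  assumes "\<And>i j. i \<noteq> j \<Longrightarrow> A $ i $ j = 0" and "invertible A"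
  shows "A $ k $ k \<noteq> 0"
proof -
  have "det A = (\<Prod>i\<in>UNIV. A $ i $ i)" by (rule det_diagonal) (use assms in blast)
  then show ?thesis using assms(2) by (simp add: invertible_det_nz)
qed

lemma matrix_inv_right:
  fixes A :: "'a::semiring_1^'n^'n"
  assumes "invertible A"
  shows "A ** matrix_inv A = mat 1"
  using assms unfolding invertible_def matrix_inv_def by (rule someI_ex[THEN conjunct1])

lemma diagonal_inversely_coercive_entry_bounds:
  fixes A :: "real^'n^'n"
  assumes diag: "\<And>i j. i \<noteq> j \<Longrightarrow> A $ i $ j = 0" and inv: "invertible A"
    and coercive: "axis k t \<bullet> (matrix_inv A *v axis k t) \<ge> \<mu> * (norm (axis k t))\<^sup>2"
    and "t \<noteq> 0" and "\<mu> > 0"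
  shows "0 < A $ k $ k \<and> A $ k $ k \<le> 1 / \<mu>"
proof -
  define w where "w = matrix_inv A *v axis k t"
  have "A *v w = axis k t"
    using matrix_inv_right[OF inv] unfolding w_def by (simp add: matrix_vector_mul_assoc)
  then have Aw: "A $ k $ k * w $ k = t"
    using diagonal_matrix_vector_mult_nth[OF diag, of w k] by simp
  have "(norm (axis k t))\<^sup>2 = t\<^sup>2" by (subst axis_eq_scaleR) simp
  then have "t * w $ k \<ge> \<mu> * t\<^sup>2"
    using coercive unfolding w_def by (simp add: inner_axis')
  then have "A $ k $ k * (w $ k)\<^sup>2 \<ge> (\<mu> * (A $ k $ k)\<^sup>2) * (w $ k)\<^sup>2"
    by (simp add: Aw[symmetric] power2_eq_square algebra_simps)
  moreover have "(w $ k)\<^sup>2 > 0" using Aw \<open>t \<noteq> 0\<close> by auto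
  ultimately have "A $ k $ k \<ge> \<mu> * (A $ k $ k)\<^sup>2" by (rule mult_right_le_imp_le)
  moreover have "A $ k $ k \<noteq> 0" using Aw \<open>t \<noteq> 0\<close> by auto
  ultimately have "0 < A $ k $ k" using \<open>\<mu> > 0\<close>
    by (smt (verit) mult_pos_pos zero_less_power2)
  moreover from this have "\<mu> * A $ k $ k \<le> 1"
    using \<open>A $ k $ k \<ge> \<mu> * (A $ k $ k)\<^sup>2\<close> by (simp add: power2_eq_square)
  ultimately show ?thesis using \<open>\<mu> > 0\<close> by (simp add: le_divide_eq mult.commute)
qed

lemma separable_gradient_nth_eq:
  fixes R :: "real^'n \<Rightarrow> real"
  assumes grad: "\<And>x. (R has_derivative (\<lambda>h. gradR x \<bullet> h)) (at x)"
    and sep: "separable R" and eq: "y $ k = y' $ k"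
  shows "gradR y $ k = gradR y' $ k"
proof -
  obtain Rc where Rc: "\<And>x. R x = (\<Sum>i\<in>UNIV. Rc i (x $ i))"
    using sep unfolding separable_def by blast
  define e :: "real^'n" where "e = axis k 1"
  have "R (y + s *\<^sub>R e) - R (y' + s *\<^sub>R e) = R y - R y'" for s
  proof -
    have "Rc i ((y + s *\<^sub>R e) $ i) - Rc i ((y' + s *\<^sub>R e) $ i) = Rc i (y $ i) - Rc i (y' $ i)" for i
      using eq by (auto simp: e_def axis_def)
    then show ?thesis unfolding Rc by (simp add: sum_subtractf[symmetric])
  qed
  then have "((\<lambda>s. R (y + s *\<^sub>R e) - R (y' + s *\<^sub>R e)) has_real_derivative 0) (at 0)"
    by simp
  moreover have "((\<lambda>s. R (y + s *\<^sub>R e)) has_real_derivative gradR y \<bullet> e) (at 0)"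
    using has_real_derivative_along_line[of R "\<lambda>h. gradR y \<bullet> h" y 0 e] grad by simp
  moreover have "((\<lambda>s. R (y' + s *\<^sub>R e)) has_real_derivative gradR y' \<bullet> e) (at 0)"
    using has_real_derivative_along_line[of R "\<lambda>h. gradR y' \<bullet> h" y' 0 e] grad by simp
  ultimately have "gradR y \<bullet> e - gradR y' \<bullet> e = 0"
    using DERIV_unique DERIV_diff by blast
  then show ?thesis by (simp add: e_def inner_axis)
qed

lemma separable_hessian_offdiagonal:
  fixes R :: "real^'n \<Rightarrow> real"
  assumes grad: "\<And>x. (R has_derivative (\<lambda>h. gradR x \<bullet> h)) (at x)"
    and hess: "\<And>x. (gradR has_derivative (\<lambda>h. HR x *v h)) (at x)"
    and sep: "separable R" and "a \<noteq> b"
  shows "HR y $ a $ b = 0"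
proof -
  define e :: "real^'n" where "e = axis b 1"
  have "((\<lambda>s. gradR (y + s *\<^sub>R e)) has_vector_derivative HR y *v e) (at 0)"
    using has_vector_derivative_along_line[of gradR "\<lambda>h. HR y *v h" y 0 e] hess by simp
  then have "((\<lambda>s. gradR (y + s *\<^sub>R e) $ a) has_real_derivative (HR y *v e) $ a) (at 0)"
    by (simp add: has_vector_derivative_vec_nth_iff has_real_derivative_iff_has_vector_derivative)
  moreover have "gradR (y + s *\<^sub>R e) $ a = gradR y $ a" for s
    by (rule separable_gradient_nth_eq[OF grad sep]) (use \<open>a \<noteq> b\<close> in \<open>simp add: e_def axis_def\<close>)
  ultimately have "(HR y *v e) $ a = 0"
    using DERIV_unique[OF _ DERIV_const] by simp
  then show ?thesis by (simp add: e_def matrix_vector_mult_basis column_def)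
qed

lemma gradient_axis_nth_has_real_derivative:
  fixes gradR :: "real^'n \<Rightarrow> real^'n"
  assumes "\<And>x. (gradR has_derivative (\<lambda>h. HR x *v h)) (at x)"
  shows "((\<lambda>r. gradR (axis k r) $ k) has_real_derivative HR (axis k r) $ k $ k) (at r)"
proof -
  have "((\<lambda>s. gradR (0 + s *\<^sub>R axis k 1)) has_vector_derivative HR (axis k r) *v axis k 1) (at r)"
    using has_vector_derivative_along_line[of gradR _ 0 r "axis k 1"] assms
    by (simp flip: axis_eq_scaleR)
  then show ?thesis
    by (simp add: has_vector_derivative_vec_nth_iff has_real_derivative_iff_has_vector_derivative
        matrix_vector_mult_basis column_def flip: axis_eq_scaleR)
qed

lemma separable_hessian_diagonal_bounds:
  fixes R :: "real^'n \<Rightarrow> real"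
  assumes R: "C2_grad_hess R gradR HR" and sep: "separable R"
    and "\<mu> > 0" and coercive: "inversely_coercive \<mu> HR"
  shows "0 < HR (axis k r) $ k $ k \<and> HR (axis k r) $ k $ k \<le> 1 / \<mu>"
proof -
  define h where "h r = HR (axis k r) $ k $ k" for r
  have grad: "\<And>x. (R has_derivative (\<lambda>h. gradR x \<bullet> h)) (at x)"
    and hess: "\<And>x. (gradR has_derivative (\<lambda>h. HR x *v h)) (at x)"
    and HR_cont: "continuous_on UNIV HR"
    using R unfolding C2_grad_hess_def by auto
  have diag: "\<And>i j. i \<noteq> j \<Longrightarrow> HR y $ i $ j = 0" for y
    using separable_hessian_offdiagonal[OF grad hess sep] .
  have inv: "invertible (HR y)"
    and coer: "y \<bullet> (matrix_inv (HR y) *v y) \<ge> \<mu> * (norm y)\<^sup>2" for y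
    using coercive unfolding inversely_coercive_def by auto
  have bounds: "0 < h t \<and> h t \<le> 1 / \<mu>" if "t \<noteq> 0" for t
    unfolding h_def using diagonal_inversely_coercive_entry_bounds[OF diag inv coer that \<open>\<mu> > 0\<close>] .
  \<comment> \<open>Coercivity at the origin is vacuous, so the entry at r = 0 is reached by continuity.\<close>
  have "0 \<le> h 0 \<and> h 0 \<le> 1 / \<mu>"
  proof -
    have "continuous_on UNIV (\<lambda>t. HR (t *\<^sub>R axis k 1))"
      by (rule continuous_on_compose2[OF HR_cont]) (auto intro: continuous_intros)
    then have "isCont h 0"
      unfolding h_def by (simp add: continuous_on_eq_continuous_at flip: axis_eq_scaleR)
    then have lim: "(h \<longlongrightarrow> h 0) (at 0)"
      by (simp add: isCont_def)
    have "\<forall>\<^sub>F t in at 0. 0 \<le> h t \<and> h t \<le> 1 / \<mu>"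
      using eventually_neq_at_within[of 0 0 UNIV] by (rule eventually_mono) (simp add: bounds less_imp_le)
    then show ?thesis
      using tendsto_lowerbound[OF lim] tendsto_upperbound[OF lim] eventually_conj_iff by force
  qed
  moreover have "h 0 \<noteq> 0"
    unfolding h_def using invertible_diagonal_nonzero[OF diag inv] .
  ultimately show ?thesis using bounds unfolding h_def by (cases "r = 0") auto
qed

lemma inv_has_real_derivative_if_pos_derivative:
  fixes \<phi> h :: "real \<Rightarrow> real"
  assumes deriv: "\<And>r. (\<phi> has_real_derivative h r) (at r)" and pos: "\<And>r. h r > 0"
  shows "inv \<phi> (\<phi> r) = r" and "(inv \<phi> has_real_derivative inverse (h r)) (at (\<phi> r))"
proof -
  have "strict_mono \<phi>"
    by (rule strict_monoI, rule DERIV_pos_imp_increasing) (use deriv pos in blast)+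
  then have inj: "inj \<phi>" by (rule strict_mono_imp_inj_on)
  then show "inv \<phi> (\<phi> r) = r" by simp
  have cont: "continuous_on UNIV \<phi>"
    using deriv by (meson DERIV_isCont continuous_at_imp_continuous_on)
  have "(inv \<phi> has_derivative (\<lambda>s. inverse (h r) * s)) (at (\<phi> r))"
    by (rule has_derivative_inverse_strong[of UNIV r \<phi> "inv \<phi>" "\<lambda>s. h r * s"])
      (use cont inj pos deriv in \<open>auto simp: has_field_derivative_def fun_eq_iff less_imp_neq[symmetric]\<close>)
  then show "(inv \<phi> has_real_derivative inverse (h r)) (at (\<phi> r))"
    by (simp add: has_field_derivative_def)
qed

lemma has_vector_derivative_from_mirror_coordinates:
  fixes x :: "real \<Rightarrow> real^'n" and \<phi> h :: "'n \<Rightarrow> real \<Rightarrow> real"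
  assumes mirror: "\<And>y k. gradR y $ k = \<phi> k (y $ k)"
    and deriv: "\<And>k r. (\<phi> k has_real_derivative h k r) (at r)" and pos: "\<And>k r. h k r > 0"
    and flow: "((\<lambda>s. gradR (x s)) has_vector_derivative v) (at t within S)"
  shows "(x has_vector_derivative (\<chi> k. v $ k / h k (x t $ k))) (at t within S)"
  unfolding has_vector_derivative_vec_nth_iff
proof
  fix k
  have "((\<lambda>s. \<phi> k (x s $ k)) has_vector_derivative v $ k) (at t within S)"
    using flow by (simp add: has_vector_derivative_vec_nth_iff mirror)
  moreover have "(inv (\<phi> k) has_real_derivative inverse (h k (x t $ k)))
      (at (\<phi> k (x t $ k)) within (\<lambda>s. \<phi> k (x s $ k)) ` S)"
    using inv_has_real_derivative_if_pos_derivative(2)[OF deriv pos]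
    by (rule has_field_derivative_at_within)
  ultimately have "((inv (\<phi> k) \<circ> (\<lambda>s. \<phi> k (x s $ k))) has_vector_derivative
      v $ k * inverse (h k (x t $ k))) (at t within S)"
    by (rule field_vector_diff_chain_within)
  moreover have "inv (\<phi> k) \<circ> (\<lambda>s. \<phi> k (x s $ k)) = (\<lambda>s. x s $ k)"
    using inv_has_real_derivative_if_pos_derivative(1)[OF deriv pos] by (simp add: o_def)
  ultimately show "((\<lambda>s. x s $ k) has_vector_derivative (\<chi> k. v $ k / h k (x t $ k)) $ k) (at t within S)"
    by (simp add: divide_inverse)
qed

lemma separable_mirror_flow_velocity:
  fixes R :: "real^'n \<Rightarrow> real" and x :: "real \<Rightarrow> real^'n"
  assumes R: "C2_grad_hess R gradR HR" and sep: "separable R"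
    and "\<mu> > 0" and coercive: "inversely_coercive \<mu> HR"
    and flow: "\<And>t. t \<in> S \<Longrightarrow> ((\<lambda>s. gradR (x s)) has_vector_derivative v t) (at t within S)"
  obtains h where "\<And>k r. 0 < h k r" and "\<And>k r. h k r \<le> 1 / \<mu>"
    and "\<And>t. t \<in> S \<Longrightarrow> (x has_vector_derivative (\<chi> k. v t $ k / h k (x t $ k))) (at t within S)"
proof -
  define h where "h k r = HR (axis k r) $ k $ k" for k r
  have grad: "\<And>x. (R has_derivative (\<lambda>h. gradR x \<bullet> h)) (at x)"
    and hess: "\<And>x. (gradR has_derivative (\<lambda>h. HR x *v h)) (at x)"
    using R unfolding C2_grad_hess_def by auto
  have pos: "0 < h k r" and le: "h k r \<le> 1 / \<mu>" for k r
    unfolding h_def using separable_hessian_diagonal_bounds[OF R sep \<open>\<mu> > 0\<close> coercive] by auto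
  have "gradR y $ k = gradR (axis k (y $ k)) $ k" for y k
    by (rule separable_gradient_nth_eq[OF grad sep]) simp
  moreover have "((\<lambda>r. gradR (axis k r) $ k) has_real_derivative h k r) (at r)" for k r
    unfolding h_def by (rule gradient_axis_nth_has_real_derivative[OF hess])
  ultimately have "(x has_vector_derivative (\<chi> k. v t $ k / h k (x t $ k))) (at t within S)"
    if "t \<in> S" for t
    using pos flow[OF that] by (rule has_vector_derivative_from_mirror_coordinates)
  with pos le show ?thesis by (rule that)
qed

lemma sgn_powr_descent:
  fixes g d \<mu> B q :: real
  assumes "0 < d" "d \<le> 1 / \<mu>" "\<mu> > 0" "q \<le> 2" "\<bar>g\<bar> \<le> B"
  shows "g * (- (sgn g * \<bar>g\<bar> powr (q - 1)) / d) \<le> - (\<mu> * B powr (q - 2)) * g\<^sup>2"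
proof (cases "g = 0")
  case False
  then have "\<bar>g\<bar> > 0" by simp
  have "g * sgn g = \<bar>g\<bar>" by (simp add: sgn_if abs_if)
  then have "g * (sgn g * \<bar>g\<bar> powr (q - 1)) = \<bar>g\<bar> * \<bar>g\<bar> powr (q - 1)"
    by (simp add: mult.assoc[symmetric])
  also have "\<dots> = \<bar>g\<bar> powr q"
    using \<open>\<bar>g\<bar> > 0\<close> by (simp add: powr_mult_base)
  also have "\<dots> = \<bar>g\<bar> powr 2 * \<bar>g\<bar> powr (q - 2)"
    by (simp only: powr_add[symmetric]) simp
  also have "\<dots> = g\<^sup>2 * \<bar>g\<bar> powr (q - 2)"
    using \<open>\<bar>g\<bar> > 0\<close> by (simp add: powr_numeral)
  finally have descent: "g * (sgn g * \<bar>g\<bar> powr (q - 1)) = g\<^sup>2 * \<bar>g\<bar> powr (q - 2)" .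
  have "B powr (q - 2) \<le> \<bar>g\<bar> powr (q - 2)"
    using \<open>\<bar>g\<bar> > 0\<close> assms(4,5) by (intro powr_mono2') auto
  moreover have "\<mu> \<le> 1 / d" using assms(1-3) by (simp add: field_simps)
  ultimately have "\<mu> * (B powr (q - 2) * g\<^sup>2) \<le> 1 / d * (\<bar>g\<bar> powr (q - 2) * g\<^sup>2)"
    using \<open>\<mu> > 0\<close> \<open>0 < d\<close> by (intro mult_mono mult_right_mono) auto
  then show ?thesis using descent by (simp add: mult_ac)
qed simp

lemma smf_dir_inner_descent:
  fixes g :: "real^'n"
  assumes "\<And>k. 0 < d k" "\<And>k. d k \<le> 1 / \<mu>" "\<mu> > 0" "q \<le> 2" "\<And>k. \<bar>g $ k\<bar> \<le> B"
  shows "g \<bullet> (\<chi> k. smf_dir q g $ k / d k) \<le> - (\<mu> * B powr (q - 2)) * (norm g)\<^sup>2"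
proof -
  have "g \<bullet> (\<chi> k. smf_dir q g $ k / d k)
      = (\<Sum>k\<in>UNIV. g $ k * (- (sgn (g $ k) * \<bar>g $ k\<bar> powr (q - 1)) / d k))"
    by (simp add: smf_dir_def inner_vec_def)
  also have "\<dots> \<le> (\<Sum>k\<in>UNIV. - (\<mu> * B powr (q - 2)) * (g $ k)\<^sup>2)"
    by (intro sum_mono sgn_powr_descent assms)
  also have "\<dots> = - (\<mu> * B powr (q - 2)) * (norm g)\<^sup>2"
    by (simp only: power2_norm_eq_inner inner_vec_def) (simp add: power2_eq_square sum_distrib_left)
  finally show ?thesis .
qed

lemma has_real_derivative_gradient_chain:
  fixes f :: "real^'n \<Rightarrow> real" and x :: "real \<Rightarrow> real^'n"
  assumes "\<And>y. (f has_derivative (\<lambda>h. gradf y \<bullet> h)) (at y)"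
    and "(x has_vector_derivative w) (at t within S)"
  shows "((\<lambda>s. f (x s)) has_real_derivative gradf (x t) \<bullet> w) (at t within S)"
  using vector_derivative_diff_chain_within[OF assms(2) has_derivative_at_withinI[OF assms(1)]]
  by (simp add: o_def has_real_derivative_iff_has_vector_derivative)

lemma steepest_mirror_flow_dissipation:
  fixes R :: "real^'n \<Rightarrow> real" and f :: "real^'n \<Rightarrow> real" and x :: "real \<Rightarrow> real^'n"
  assumes "q \<le> 2" and R: "C2_grad_hess R gradR HR" and sep: "separable R"
    and "\<mu> > 0" and coercive: "inversely_coercive \<mu> HR" and f: "C1_grad f gradf"
    and flow: "\<And>t. t \<ge> 0 \<Longrightarrow>
        ((\<lambda>s. gradR (x s)) has_vector_derivative smf_dir q (gradf (x t))) (at t within {0..})"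
    and bound: "\<And>t i. t > 0 \<Longrightarrow> \<bar>gradf (x t) $ i\<bar> \<le> B"
  obtains D where "\<And>t. t \<ge> 0 \<Longrightarrow> ((\<lambda>t. f (x t)) has_real_derivative D t) (at t within {0..})"
    and "\<And>t. t > 0 \<Longrightarrow> D t \<le> - (\<mu> * B powr (q - 2)) * (norm (gradf (x t)))\<^sup>2"
    and "continuous_on {0..} x"
proof -
  have flow': "((\<lambda>s. gradR (x s)) has_vector_derivative smf_dir q (gradf (x t))) (at t within {0..})"
    if "t \<in> {0..}" for t
    using flow that by simp
  obtain h where pos: "\<And>k r. 0 < h k r" and le: "\<And>k r. h k r \<le> 1 / \<mu>"
    and dx: "\<And>t. t \<in> {0..} \<Longrightarrow> (x has_vector_derivative
        (\<chi> k. smf_dir q (gradf (x t)) $ k / h k (x t $ k))) (at t within {0..})"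
    using separable_mirror_flow_velocity[OF R sep \<open>\<mu> > 0\<close> coercive flow'] by blast
  define D where "D t = gradf (x t) \<bullet> (\<chi> k. smf_dir q (gradf (x t)) $ k / h k (x t $ k))" for t
  have grad: "\<And>y. (f has_derivative (\<lambda>h. gradf y \<bullet> h)) (at y)"
    using f by (simp add: C1_grad_def)
  have "((\<lambda>t. f (x t)) has_real_derivative D t) (at t within {0..})" if "t \<ge> 0" for t
    unfolding D_def using that by (intro has_real_derivative_gradient_chain[OF grad] dx) simp
  moreover have "D t \<le> - (\<mu> * B powr (q - 2)) * (norm (gradf (x t)))\<^sup>2" if "t > 0" for t
    unfolding D_def using pos le \<open>\<mu> > 0\<close> \<open>q \<le> 2\<close> bound[OF that] by (rule smf_dir_inner_descent)
  moreover have "continuous_on {0..} x"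
    unfolding continuous_on_eq_continuous_within using dx has_vector_derivative_continuous by blast
  ultimately show ?thesis by (rule that)
qed

lemma antimono_on_nonneg_if_derivative_nonpos:
  fixes F D :: "real \<Rightarrow> real"
  assumes deriv: "\<And>t. t \<ge> 0 \<Longrightarrow> (F has_real_derivative D t) (at t within {0..})"
    and nonpos: "\<And>t. t > 0 \<Longrightarrow> D t \<le> 0" and "0 \<le> s" "s \<le> t"
  shows "F t \<le> F s"
proof (rule DERIV_nonpos_imp_decreasing_open[OF \<open>s \<le> t\<close>])
  have "continuous_on {0..} F"
    by (rule DERIV_continuous_on) (use deriv in simp)
  then show "continuous_on {s..t} F"
    by (rule continuous_on_subset) (use \<open>0 \<le> s\<close> in auto)
  fix r assume "s < r" "r < t"
  then have "r > 0" using \<open>0 \<le> s\<close> by simp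
  then show "\<exists>y. (F has_real_derivative y) (at r) \<and> y \<le> 0"
    using deriv[of r] nonpos[of r] by (auto simp: at_within_nonneg_eq_at)
qed

lemma dissipation_integral_bound:
  fixes F D G :: "real \<Rightarrow> real"
  assumes deriv: "\<And>t. t \<ge> 0 \<Longrightarrow> (F has_real_derivative D t) (at t within {0..})"
    and dissipation: "\<And>t. t > 0 \<Longrightarrow> D t \<le> - c * G t"
    and G: "continuous_on {0..} G" and "T \<ge> 0"
  shows "F T + c * integral {0..T} G \<le> F 0"
proof -
  have GT: "continuous_on {0..T} G" by (rule continuous_on_subset[OF G]) auto
  have "continuous_on {0..} F"
    by (rule DERIV_continuous_on) (use deriv in simp)
  then have FT: "continuous_on {0..T} F" by (rule continuous_on_subset) auto
  have "F T + c * integral {0..T} G \<le> F 0 + c * integral {0..0} G"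
  proof (rule DERIV_nonpos_imp_decreasing_open[OF \<open>T \<ge> 0\<close>])
    show "continuous_on {0..T} (\<lambda>t. F t + c * integral {0..t} G)"
      by (intro continuous_intros FT indefinite_integral_continuous_1 integrable_continuous_real GT)
    fix r assume r: "0 < r" "r < T"
    have "(F has_real_derivative D r) (at r)"
      using r deriv[of r] by (simp add: at_within_nonneg_eq_at)
    moreover have "at r within {0..T} = at r"
      using r by (intro at_within_interior) simp
    then have "((\<lambda>u. integral {0..u} G) has_real_derivative G r) (at r)"
      using integral_has_real_derivative[OF GT, of r] r by simp
    ultimately have "((\<lambda>t. F t + c * integral {0..t} G) has_real_derivative D r + c * G r) (at r)"
      by (intro DERIV_add DERIV_cmult)
    moreover have "D r + c * G r \<le> 0" using dissipation[of r] r by simp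
    ultimately show "\<exists>y. ((\<lambda>t. F t + c * integral {0..t} G) has_real_derivative y) (at r) \<and> y \<le> 0"
      by blast
  qed
  then show ?thesis by simp
qed

lemma antimono_bounded_below_tendsto:
  fixes F :: "real \<Rightarrow> real"
  assumes antimono: "\<And>s t. 0 \<le> s \<Longrightarrow> s \<le> t \<Longrightarrow> F t \<le> F s" and lower: "\<And>t. m \<le> F t"
  obtains L where "(F \<longlongrightarrow> L) at_top" and "\<And>t. t \<ge> 0 \<Longrightarrow> L \<le> F t"
proof
  have bdd: "bdd_below (F ` {0..})" using lower by (intro bdd_belowI[of _ m]) auto
  then show "Inf (F ` {0..}) \<le> F t" if "t \<ge> 0" for t
    using that by (auto intro: cInf_lower)
  show "(F \<longlongrightarrow> Inf (F ` {0..})) at_top"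
  proof (rule decreasing_tendsto)
    show "\<forall>\<^sub>F t in at_top. Inf (F ` {0..}) \<le> F t"
      using eventually_ge_at_top[of 0] by eventually_elim (use bdd in \<open>auto intro: cInf_lower\<close>)
    fix a assume "Inf (F ` {0..}) < a"
    then obtain t0 where t0: "t0 \<ge> 0" "F t0 < a"
      by (subst (asm) cInf_less_iff) (use bdd in auto)
    show "\<forall>\<^sub>F t in at_top. F t < a"
      using eventually_ge_at_top[of t0] by eventually_elim (use t0 antimono in \<open>fastforce intro: le_less_trans\<close>)
  qed
qed

lemma has_integral_nonneg_if_bounded_partial_integrals:
  fixes G :: "real \<Rightarrow> real"
  assumes G: "continuous_on {0..} G" and nonneg: "\<And>t. t \<ge> 0 \<Longrightarrow> G t \<ge> 0"
    and bounded: "\<And>T. T \<ge> 0 \<Longrightarrow> integral {0..T} G \<le> K"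
  shows "\<exists>I. (G has_integral I) {0..} \<and> I \<le> K"
proof -
  define Gk where "Gk k t = (if t \<in> {0..real k} then G t else 0)" for k :: nat and t
  have integral_Gk: "integral {0..} (Gk k) = integral {0..real k} G" for k
    unfolding Gk_def integral_restrict_Int by (simp add: Int_absorb2)
  have integrable: "G integrable_on {0..real k}" for k
    by (rule integrable_continuous_real, rule continuous_on_subset[OF G]) auto
  have "G integrable_on {0..} \<and> ((\<lambda>k. integral {0..} (Gk k)) \<longlonglongrightarrow> integral {0..} G)"
  proof (rule monotone_convergence_increasing)
    show "Gk k integrable_on {0..}" for k
      unfolding Gk_def integrable_restrict_Int using integrable[of k] by (simp add: Int_absorb2)
    show "Gk k t \<le> Gk (Suc k) t" if "t \<in> {0..}" for k t
      unfolding Gk_def using nonneg[of t] that by auto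
    show "(\<lambda>k. Gk k t) \<longlonglongrightarrow> G t" if "t \<in> {0..}" for t
    proof (rule tendsto_eventually)
      obtain N :: nat where "t \<le> real N" using real_arch_simple by blast
      then show "\<forall>\<^sub>F k in sequentially. Gk k t = G t"
        unfolding eventually_sequentially Gk_def using that by (intro exI[of _ N]) auto
    qed
    have "0 \<le> integral {0..real k} G" for k
      using integrable by (rule integral_nonneg) (simp add: nonneg)
    then show "bounded (range (\<lambda>k. integral {0..} (Gk k)))"
      unfolding bounded_real integral_Gk using bounded by (intro exI[of _ K]) auto
  qed
  then have "G integrable_on {0..}" and "(\<lambda>k. integral {0..real k} G) \<longlonglongrightarrow> integral {0..} G"
    using integral_Gk by auto
  moreover from this(2) have "integral {0..} G \<le> K"
    by (rule tendsto_upperbound) (use bounded in auto)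
  ultimately show ?thesis by (blast intro: integrable_integral)
qed

lemma dissipation_tendsto_and_integral:
  fixes F D G :: "real \<Rightarrow> real"
  assumes deriv: "\<And>t. t \<ge> 0 \<Longrightarrow> (F has_real_derivative D t) (at t within {0..})"
    and dissipation: "\<And>t. t > 0 \<Longrightarrow> D t \<le> - c * G t" and "c > 0"
    and G: "continuous_on {0..} G" and G_nonneg: "\<And>t. G t \<ge> 0" and lower: "\<And>t. m \<le> F t"
  shows "(\<forall>s t. 0 \<le> s \<and> s \<le> t \<longrightarrow> F t \<le> F s)
    \<and> (\<exists>L I. (F \<longlongrightarrow> L) at_top \<and> (G has_integral I) {0..} \<and> I \<le> (F 0 - L) / c)"
proof -
  have nonpos: "D t \<le> 0" if "t > 0" for t
  proof -
    have "c * G t \<ge> 0" using \<open>c > 0\<close> G_nonneg[of t] by simp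
    then show ?thesis using dissipation[OF that] by linarith
  qed
  have antimono: "F t \<le> F s" if "0 \<le> s" "s \<le> t" for s t
    using antimono_on_nonneg_if_derivative_nonpos[OF deriv nonpos that] .
  obtain L where lim: "(F \<longlongrightarrow> L) at_top" and L_le: "\<And>t. t \<ge> 0 \<Longrightarrow> L \<le> F t"
    by (rule antimono_bounded_below_tendsto[OF antimono lower]) auto
  have "integral {0..T} G \<le> (F 0 - L) / c" if "T \<ge> 0" for T
  proof -
    have "c * integral {0..T} G \<le> F 0 - L"
      using dissipation_integral_bound[OF deriv dissipation G that] L_le[OF that] by linarith
    then show ?thesis by (simp add: pos_le_divide_eq[OF \<open>c > 0\<close>] mult.commute)
  qed
  then obtain I where "(G has_integral I) {0..}" and "I \<le> (F 0 - L) / c"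
    using has_integral_nonneg_if_bounded_partial_integrals[OF G G_nonneg] by auto
  with antimono lim show ?thesis by blast
qed

lemma exponential_decay_if_derivative_bound:
  fixes F D :: "real \<Rightarrow> real"
  assumes deriv: "\<And>t. t \<ge> 0 \<Longrightarrow> (F has_real_derivative D t) (at t within {0..})"
    and decay: "\<And>t. t > 0 \<Longrightarrow> D t \<le> - r * (F t - a)" and "t \<ge> 0"
  shows "F t - a \<le> (F 0 - a) * exp (- r * t)"
proof -
  define E where "E t = (F t - a) * exp (r * t)" for t
  have "E t \<le> E 0"
  proof (rule antimono_on_nonneg_if_derivative_nonpos[of E])
    show "(E has_real_derivative D s * exp (r * s) + (F s - a) * (exp (r * s) * r)) (at s within {0..})"
      if "s \<ge> 0" for s
      unfolding E_def using deriv[OF that] by (auto intro!: derivative_eq_intros)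
    show "D s * exp (r * s) + (F s - a) * (exp (r * s) * r) \<le> 0" if "s > 0" for s
    proof -
      have "exp (r * s) * (D s + r * (F s - a)) \<le> 0"
        using decay[OF that] by (intro mult_nonneg_nonpos) auto
      then show ?thesis by (simp add: algebra_simps)
    qed
  qed (use \<open>t \<ge> 0\<close> in auto)
  then have "(F t - a) * exp (r * t) * exp (- r * t) \<le> (F 0 - a) * exp (- r * t)"
    unfolding E_def by (intro mult_right_mono) auto
  then show ?thesis by (simp add: mult.assoc flip: exp_add)
qed

lemma PL_exponential_decay:
  fixes f :: "real^'n \<Rightarrow> real" and x :: "real \<Rightarrow> real^'n"
  assumes deriv: "\<And>t. t \<ge> 0 \<Longrightarrow> ((\<lambda>t. f (x t)) has_real_derivative D t) (at t within {0..})"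
    and dissipation: "\<And>t. t > 0 \<Longrightarrow> D t \<le> - c * (norm (gradf (x t)))\<^sup>2"
    and "c \<ge> 0" and "\<Lambda> \<ge> 0" and PL: "\<And>y. (norm (gradf y))\<^sup>2 / 2 \<ge> \<Lambda> * (f y - f xs)"
    and min: "\<forall>y. f xs \<le> f y" and "t \<ge> 0"
  shows "f (x t) - f xs \<le> (f (x 0) - f xs) * exp (- (c * \<Lambda>) * t)"
proof (rule exponential_decay_if_derivative_bound[OF deriv _ \<open>t \<ge> 0\<close>])
  \<comment> \<open>Only half of the PL inequality is used: the stated rate drops its factor 2.\<close>
  fix s :: real assume "s > 0"
  have "c * (2 * (\<Lambda> * (f (x s) - f xs))) \<le> c * (norm (gradf (x s)))\<^sup>2"
    using PL[of "x s"] \<open>c \<ge> 0\<close> by (intro mult_left_mono) auto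
  moreover have "0 \<le> c * (\<Lambda> * (f (x s) - f xs))"
    using \<open>c \<ge> 0\<close> \<open>\<Lambda> \<ge> 0\<close> min by simp
  ultimately show "D s \<le> - (c * \<Lambda>) * (f (x s) - f xs)"
    using dissipation[OF \<open>s > 0\<close>] by (simp add: mult.assoc)
qed

lemma tendsto_if_exponential_bound:
  fixes F :: "real \<Rightarrow> real"
  assumes "r > 0" and lower: "\<And>t. a \<le> F t" and upper: "\<And>t. t \<ge> 0 \<Longrightarrow> F t - a \<le> K * exp (- r * t)"
  shows "(F \<longlongrightarrow> a) at_top"
proof -
  have "filterlim (\<lambda>t. r * t) at_top at_top"
    by (rule filterlim_tendsto_pos_mult_at_top[OF tendsto_const \<open>r > 0\<close> filterlim_ident])
  then have "filterlim (\<lambda>t. - r * t) at_bot at_top"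
    by (simp add: filterlim_uminus_at_top)
  then have "((\<lambda>t. exp (- r * t)) \<longlongrightarrow> 0) at_top"
    by (rule filterlim_compose[OF exp_at_bot])
  then have bound_lim: "((\<lambda>t. K * exp (- r * t)) \<longlongrightarrow> 0) at_top"
    by (rule tendsto_mult_right_zero)
  have "\<forall>\<^sub>F t in at_top. 0 \<le> F t - a"
    using lower by simp
  moreover have "\<forall>\<^sub>F t in at_top. F t - a \<le> K * exp (- r * t)"
    using eventually_ge_at_top[of 0] by eventually_elim (rule upper)
  ultimately have "((\<lambda>t. F t - a) \<longlongrightarrow> 0) at_top"
    by (rule tendsto_sandwich[OF _ _ tendsto_const bound_lim])
  then show ?thesis by (rule LIM_zero_cancel)
qed

lemma strongly_convex_quadratic_growth:
  fixes f :: "real^'n \<Rightarrow> real"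
  assumes "strongly_convex f" and min: "\<forall>y. f xs \<le> f y"
  obtains m where "m > 0" and "\<And>y. m / 4 * (norm (y - xs))\<^sup>2 \<le> f y - f xs"
proof -
  obtain m where "m > 0" and sc: "\<And>x y u. 0 \<le> u \<Longrightarrow> u \<le> 1 \<Longrightarrow>
      f (u *\<^sub>R x + (1 - u) *\<^sub>R y) \<le> u * f x + (1 - u) * f y - m / 2 * u * (1 - u) * (norm (x - y))\<^sup>2"
    using assms(1) unfolding strongly_convex_def by blast
  have "m / 4 * (norm (y - xs))\<^sup>2 \<le> f y - f xs" for y
  proof -
    have "f xs \<le> f ((1/2) *\<^sub>R y + (1 - 1/2) *\<^sub>R xs)" using min by blast
    also have "\<dots> \<le> (1/2) * f y + (1 - 1/2) * f xs - m / 2 * (1/2) * (1 - 1/2) * (norm (y - xs))\<^sup>2"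
      by (rule sc) auto
    finally show ?thesis by simp
  qed
  with \<open>m > 0\<close> show ?thesis by (rule that)
qed

lemma strongly_convex_minimizer_unique:
  fixes f :: "real^'n \<Rightarrow> real"
  assumes "strongly_convex f" and "\<forall>y. f a \<le> f y" and "\<forall>y. f b \<le> f y"
  shows "a = b"
proof -
  obtain m where "m > 0" and "m / 4 * (norm (b - a))\<^sup>2 \<le> f b - f a"
    using strongly_convex_quadratic_growth[OF assms(1,2)] by blast
  moreover have "f b = f a" using assms(2,3) by (meson order_antisym)
  ultimately show ?thesis by (simp add: mult_le_0_iff)
qed

lemma strongly_convex_imp_convex_on:
  fixes f :: "real^'n \<Rightarrow> real"
  assumes "strongly_convex f"
  shows "convex_on UNIV f"
proof (rule convex_onI)
  obtain m where "m > 0" and sc: "\<And>x y u. 0 \<le> u \<Longrightarrow> u \<le> 1 \<Longrightarrow>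
      f (u *\<^sub>R x + (1 - u) *\<^sub>R y) \<le> u * f x + (1 - u) * f y - m / 2 * u * (1 - u) * (norm (x - y))\<^sup>2"
    using assms unfolding strongly_convex_def by blast
  fix t :: real and x y :: "real^'n"
  assume "0 < t" "t < 1"
  have "f ((1 - t) *\<^sub>R x + (1 - (1 - t)) *\<^sub>R y)
      \<le> (1 - t) * f x + (1 - (1 - t)) * f y - m / 2 * (1 - t) * (1 - (1 - t)) * (norm (x - y))\<^sup>2"
    by (rule sc) (use \<open>0 < t\<close> \<open>t < 1\<close> in auto)
  moreover have "0 \<le> m / 2 * (1 - t) * (1 - (1 - t)) * (norm (x - y))\<^sup>2"
    using \<open>m > 0\<close> \<open>0 < t\<close> \<open>t < 1\<close> by simp
  ultimately show "f ((1 - t) *\<^sub>R x + t *\<^sub>R y) \<le> (1 - t) * f x + t * f y" by simp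
qed simp

lemma convex_on_gradient_inequality:
  fixes f :: "'a::real_normed_vector \<Rightarrow> real"
  assumes "convex_on UNIV f" and "(f has_derivative f') (at y)"
  shows "f' (z - y) \<le> f z - f y"
proof -
  define \<phi> where "\<phi> u = f (y + u *\<^sub>R (z - y))" for u
  have quotient: "(\<phi> u - \<phi> 0) / u \<le> f z - f y" if "0 < u" "u \<le> 1" for u
  proof -
    have "\<phi> u = f ((1 - u) *\<^sub>R y + u *\<^sub>R z)" by (simp add: \<phi>_def algebra_simps)
    also have "\<dots> \<le> (1 - u) * f y + u * f z" using convex_onD[OF assms(1)] that by simp
    finally have "\<phi> u - \<phi> 0 \<le> u * (f z - f y)" by (simp add: \<phi>_def algebra_simps)
    then show ?thesis using that by (simp add: divide_le_eq mult.commute)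
  qed
  have "(\<phi> has_real_derivative f' (z - y)) (at 0)"
    unfolding \<phi>_def using has_real_derivative_along_line[of f f' y 0 "z - y"] assms(2) by simp
  then have "((\<lambda>u. (\<phi> u - \<phi> 0) / (u - 0)) \<longlongrightarrow> f' (z - y)) (at_right 0)"
    unfolding has_field_derivative_iff by (rule tendsto_mono[OF at_within_le_at])
  then have "((\<lambda>u. (\<phi> u - \<phi> 0) / u) \<longlongrightarrow> f' (z - y)) (at_right 0)"
    by simp
  then show ?thesis
    by (rule tendsto_upperbound) (auto simp: eventually_at_right_field intro!: exI[of _ 1] quotient)
qed

lemma strongly_convex_PL_inequality:
  fixes f :: "real^'n \<Rightarrow> real"
  assumes sc: "strongly_convex f" and f: "C1_grad f gradf" and min: "\<forall>y. f xs \<le> f y"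
  obtains \<Lambda> where "\<Lambda> > 0" and "\<And>y. (norm (gradf y))\<^sup>2 / 2 \<ge> \<Lambda> * (f y - f xs)"
proof -
  obtain m where "m > 0" and growth: "\<And>y. m / 4 * (norm (y - xs))\<^sup>2 \<le> f y - f xs"
    using strongly_convex_quadratic_growth[OF sc min] by blast
  have "m / 8 * (f y - f xs) \<le> (norm (gradf y))\<^sup>2 / 2" for y
  proof -
    define a G r where "a = f y - f xs" and "G = norm (gradf y)" and "r = norm (y - xs)"
    have "a \<ge> 0" using min unfolding a_def by simp
    have "gradf y \<bullet> (xs - y) \<le> f xs - f y"
      using convex_on_gradient_inequality[OF strongly_convex_imp_convex_on[OF sc],
          of "\<lambda>h. gradf y \<bullet> h" y xs] f
      unfolding C1_grad_def by simp
    then have "a \<le> gradf y \<bullet> (y - xs)"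
      unfolding a_def by (simp add: inner_diff_right)
    also have "\<dots> \<le> G * r"
      unfolding G_def r_def by (rule norm_cauchy_schwarz)
    finally have "a \<le> G * r" .
    have "r\<^sup>2 \<le> 4 * a / m"
      using growth[of y] \<open>m > 0\<close> unfolding a_def r_def by (simp add: field_simps)
    show ?thesis
    proof (cases "a = 0")
      case False
      then have "a > 0" using \<open>a \<ge> 0\<close> by simp
      have "a * a \<le> (G * r)\<^sup>2"
        using \<open>a \<le> G * r\<close> \<open>a \<ge> 0\<close> by (simp add: power2_eq_square mult_mono)
      also have "\<dots> = G\<^sup>2 * r\<^sup>2" by (simp add: power_mult_distrib)
      also have "\<dots> \<le> G\<^sup>2 * (4 * a / m)"
        using \<open>r\<^sup>2 \<le> 4 * a / m\<close> by (intro mult_left_mono) auto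
      also have "\<dots> = a * (4 * G\<^sup>2 / m)" by simp
      finally have "a \<le> 4 * G\<^sup>2 / m"
        using \<open>a > 0\<close> by (rule mult_left_le_imp_le)
      then show ?thesis using \<open>m > 0\<close> unfolding a_def G_def by (simp add: field_simps)
    qed (simp add: a_def)
  qed
  moreover have "m / 8 > 0" using \<open>m > 0\<close> by simp
  ultimately show ?thesis using that by blast
qed

lemma strongly_convex_tendsto_minimizer:
  fixes f :: "real^'n \<Rightarrow> real" and x :: "'a \<Rightarrow> real^'n"
  assumes sc: "strongly_convex f" and min: "\<forall>y. f xs \<le> f y"
    and lim: "((\<lambda>t. f (x t)) \<longlongrightarrow> f xs) F"
  shows "(x \<longlongrightarrow> xs) F"
proof -
  obtain m where "m > 0" and growth: "\<And>y. m / 4 * (norm (y - xs))\<^sup>2 \<le> f y - f xs"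
    using strongly_convex_quadratic_growth[OF sc min] by blast
  have "((\<lambda>t. f (x t) - f xs) \<longlongrightarrow> 0) F"
    using lim by (rule LIM_zero)
  then have "((\<lambda>t. sqrt (4 * (f (x t) - f xs) / m)) \<longlongrightarrow> sqrt (4 * 0 / m)) F"
    using \<open>m > 0\<close> by (intro tendsto_real_sqrt tendsto_divide tendsto_mult tendsto_const) simp_all
  then have lim0: "((\<lambda>t. sqrt (4 * (f (x t) - f xs) / m)) \<longlongrightarrow> 0) F" by simp
  have bound: "norm (x t - xs) \<le> sqrt (4 * (f (x t) - f xs) / m)" for t
  proof (rule real_le_rsqrt)
    show "(norm (x t - xs))\<^sup>2 \<le> 4 * (f (x t) - f xs) / m"
      using growth[of "x t"] \<open>m > 0\<close> by (simp add: le_divide_eq algebra_simps)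
  qed
  have "((\<lambda>t. x t - xs) \<longlongrightarrow> 0) F"
    using bound by (intro Lim_null_comparison[OF always_eventually lim0]) blast
  then show ?thesis by (rule LIM_zero_cancel)
qed

lemma dissipative_trajectory_tendsto_minimizer:
  fixes f :: "real^'n \<Rightarrow> real" and x :: "real \<Rightarrow> real^'n"
  assumes deriv: "\<And>t. t \<ge> 0 \<Longrightarrow> ((\<lambda>t. f (x t)) has_real_derivative D t) (at t within {0..})"
    and dissipation: "\<And>t. t > 0 \<Longrightarrow> D t \<le> - c * (norm (gradf (x t)))\<^sup>2" and "c > 0"
    and sc: "strongly_convex f" and f: "C1_grad f gradf" and min: "\<forall>y. f xs \<le> f y"
  shows "(x \<longlongrightarrow> xs) at_top"
proof -
  obtain \<Lambda> where "\<Lambda> > 0" and PL: "\<And>y. (norm (gradf y))\<^sup>2 / 2 \<ge> \<Lambda> * (f y - f xs)"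
    using strongly_convex_PL_inequality[OF sc f min] by blast
  have "((\<lambda>t. f (x t)) \<longlongrightarrow> f xs) at_top"
  proof (rule tendsto_if_exponential_bound)
    show "c * \<Lambda> > 0" using \<open>c > 0\<close> \<open>\<Lambda> > 0\<close> by simp
    show "f xs \<le> f (x t)" for t using min by simp
    show "f (x t) - f xs \<le> (f (x 0) - f xs) * exp (- (c * \<Lambda>) * t)" if "t \<ge> 0" for t
      using \<open>c > 0\<close> \<open>\<Lambda> > 0\<close> PL min that
      by (intro PL_exponential_decay[OF deriv dissipation]) auto
  qed
  then show ?thesis by (rule strongly_convex_tendsto_minimizer[OF sc min])
qed

theorem theorem1:
  fixes R :: "real^'n \<Rightarrow> real" and gradR :: "real^'n \<Rightarrow> real^'n" and HR :: "real^'n \<Rightarrow> real^'n^'n"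
    and f :: "real^'n \<Rightarrow> real" and gradf :: "real^'n \<Rightarrow> real^'n"
    and x :: "real \<Rightarrow> real^'n" and q \<mu> B :: real
  assumes q: "1 \<le> q" "q \<le> 2"
    and R_C2: "C2_grad_hess R gradR HR"
    and R_sep: "separable R"
    and mu: "\<mu> > 0"
    and R_coercive: "inversely_coercive \<mu> HR"
    and f_C1: "C1_grad f gradf"
    and flow: "\<And>t. t \<ge> 0 \<Longrightarrow>
        ((\<lambda>s. gradR (x s)) has_vector_derivative smf_dir q (gradf (x t))) (at t within {0..})"
    and minimizer: "\<exists>xm. \<forall>y. f xm \<le> f y"
    and B: "B > 0"
    and bound: "\<And>t i. t > 0 \<Longrightarrow> \<bar>gradf (x t) $ i\<bar> \<le> B"
  shows "(\<forall>s t. 0 \<le> s \<and> s \<le> t \<longrightarrow> f (x t) \<le> f (x s))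
    \<and> (\<exists>L I. ((\<lambda>t. f (x t)) \<longlongrightarrow> L) at_top
          \<and> ((\<lambda>t. (norm (gradf (x t)))\<^sup>2) has_integral I) {0..}
          \<and> I \<le> B powr (2 - q) * (f (x 0) - L) / \<mu>)
    \<and> (strongly_convex f \<longrightarrow>
          (\<exists>!xs. \<forall>y. f xs \<le> f y)
          \<and> (\<forall>xs. (\<forall>y. f xs \<le> f y) \<longrightarrow>
               (x \<longlongrightarrow> xs) at_top
               \<and> (\<forall>\<Lambda>>0. (\<forall>y. (norm (gradf y))\<^sup>2 / 2 \<ge> \<Lambda> * (f y - f xs)) \<longrightarrow>
                    (\<forall>t\<ge>0. f (x t) - f xs \<le> (f (x 0) - f xs) * exp (- \<mu> * B powr (q - 2) * \<Lambda> * t)))))"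
proof -
  define c where "c = \<mu> * B powr (q - 2)"
  have "c > 0" unfolding c_def using mu B by simp
  have "B powr (2 - q) = 1 / B powr (q - 2)"
    using powr_minus_divide[of B "q - 2"] by simp
  then have c_inverse: "y / c = B powr (2 - q) * y / \<mu>" for y
    unfolding c_def by simp
  obtain D where deriv: "\<And>t. t \<ge> 0 \<Longrightarrow> ((\<lambda>t. f (x t)) has_real_derivative D t) (at t within {0..})"
    and dissipation: "\<And>t. t > 0 \<Longrightarrow> D t \<le> - c * (norm (gradf (x t)))\<^sup>2"
    and "continuous_on {0..} x"
    unfolding c_def
    by (rule steepest_mirror_flow_dissipation[OF q(2) R_C2 R_sep mu R_coercive f_C1 flow bound]) auto
  have gradient_cont: "continuous_on {0..} (\<lambda>t. (norm (gradf (x t)))\<^sup>2)"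
    using f_C1 \<open>continuous_on {0..} x\<close> unfolding C1_grad_def
    by (auto intro!: continuous_intros intro: continuous_on_compose2)
  obtain xm where xm: "\<forall>y. f xm \<le> f y" using minimizer by blast
  then have lower: "\<And>t. f xm \<le> f (x t)" by simp
  have "(\<forall>s t. 0 \<le> s \<and> s \<le> t \<longrightarrow> f (x t) \<le> f (x s))
      \<and> (\<exists>L I. ((\<lambda>t. f (x t)) \<longlongrightarrow> L) at_top
          \<and> ((\<lambda>t. (norm (gradf (x t)))\<^sup>2) has_integral I) {0..} \<and> I \<le> (f (x 0) - L) / c)"
    by (rule dissipation_tendsto_and_integral[OF deriv dissipation \<open>c > 0\<close> gradient_cont
          zero_le_power2 lower])
  moreover have "(\<exists>!xs. \<forall>y. f xs \<le> f y) \<and> (\<forall>xs. (\<forall>y. f xs \<le> f y) \<longrightarrow> (x \<longlongrightarrow> xs) at_top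
      \<and> (\<forall>\<Lambda>>0. (\<forall>y. (norm (gradf y))\<^sup>2 / 2 \<ge> \<Lambda> * (f y - f xs)) \<longrightarrow>
           (\<forall>t\<ge>0. f (x t) - f xs \<le> (f (x 0) - f xs) * exp (- (c * \<Lambda>) * t))))"
    if "strongly_convex f"
    using xm strongly_convex_minimizer_unique[OF that]
      dissipative_trajectory_tendsto_minimizer[OF deriv dissipation \<open>c > 0\<close> that f_C1]
      PL_exponential_decay[OF deriv dissipation] \<open>c > 0\<close>
    by (metis less_imp_le)
  ultimately show ?thesis unfolding c_inverse by (simp add: c_def mult_ac)
qed

end
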